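(* Let $T^1\subseteq T^2\subseteq T$, let $\mathbf{z}^1$ be an optimal solution of ODMTS-DFD$(T^1)$ and $\mathbf{z}^2$ an optimal solution of ODMTS-DFD$(T^2)$. Then $$\sum_{r\in T^2\setminus T^1}p^r\big(g^r(\mathbf{z}^2)-g^r(\mathbf{z}^1)\big)\le 0.$$
   Context: Let $N$ be a finite set of nodes and $H \subseteq N$ a set of hubs. An ODMTS design is a vector $\mathbf{z}=(z_{hl})_{h,l\in H}\in\{0,1\}^{H\times H}$ satisfying $\sum_{l\in H} z_{hl}=\sum_{l\in H} z_{lh}$ for all $h\in H$; opening arc $(h,l)$ costs $\beta_{hl}$. Let $T$ be a finite set of trips; trip $r$ has origin $or^r\in N$, destination $de^r\in N$, number of riders $p^r\ge 0$, and cost coefficients $\tau^r_{hl}$ ($h,l\in H$) and $\gamma^r_{ij}$ ($i,j\in N$); $t_{hl}, t^{wait}_{hl}$ are bus travel and waiting times and $t_{ij}$ shuttle travel times. Given a design $\mathbf{z}$, a route for $r$ is a pair of binary vectors $x^r\in\{0,1\}^{H\times H}$, $y^r\in\{0,1\}^{N\times N}$ with $x^r_{hl}\le z_{hl}$ and, for every $i\in N$, $\sum_{h\in H}(x^r_{ih}-x^r_{hi})\,[\text{if } i\in H] + \sum_{j\in N}(y^r_{ij}-y^r_{ji})$ equal to $1$ if $i=or^r$, $-1$ if $i=de^r$, and $0$ otherwise. Its cost is $g^r=\sum_{h,l}\tau^r_{hl}x^r_{hl}+\sum_{i,j}\gamma^r_{ij}y^r_{ij}$ and its travel time is $f^r=\sum_{h,l}(t_{hl}+t^{wait}_{hl})x^r_{hl}+\sum_{i,j}t_{ij}y^r_{ij}$.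 The route of $r$ under $\mathbf{z}$ is a route minimizing $(g^r,f^r)$ lexicographically; $g^r(\mathbf{z})$ denotes its cost (the optimum cost of trip $r$ under $\mathbf{z}$). For $\hat T\subseteq T$, ODMTS-DFD$(\hat T)$ is the problem of minimizing $\sum_{h,l\in H}\beta_{hl}z_{hl}+\sum_{r\in\hat T}p^r g^r(\mathbf{z})$ over designs $\mathbf{z}$. *)

theory Defs
  imports Complex_Main
begin

text \<open>Nodes have type 'n, trips type 't. A binary vector indexed by H x H (or N x N)
  is a function 'n => 'n => bool that is False outside the index set.\<close>

definition is_design :: "'n set \<Rightarrow> ('n \<Rightarrow> 'n \<Rightarrow> bool) \<Rightarrow> bool" where
  "is_design H z \<longleftrightarrow>
     (\<forall>h l. z h l \<longrightarrow> h \<in> H \<and> l \<in> H) \<and>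
     (\<forall>h\<in>H. (\<Sum>l\<in>H. of_bool (z h l) :: int) = (\<Sum>l\<in>H. of_bool (z l h)))"

definition is_route :: "'n set \<Rightarrow> 'n set \<Rightarrow> ('n \<Rightarrow> 'n \<Rightarrow> bool) \<Rightarrow> 'n \<Rightarrow> 'n
    \<Rightarrow> ('n \<Rightarrow> 'n \<Rightarrow> bool) \<Rightarrow> ('n \<Rightarrow> 'n \<Rightarrow> bool) \<Rightarrow> bool" where
  "is_route N H z orig dest x y \<longleftrightarrow>
     (\<forall>h l. x h l \<longrightarrow> h \<in> H \<and> l \<in> H \<and> z h l) \<and>
     (\<forall>i j. y i j \<longrightarrow> i \<in> N \<and> j \<in> N) \<and>
     (\<forall>i\<in>N. (if i \<in> H then (\<Sum>h\<in>H. of_bool (x i h) - of_bool (x h i)) else 0)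
              + (\<Sum>j\<in>N. of_bool (y i j) - of_bool (y j i))
            = (if i = orig then 1 else if i = dest then -1 else (0::int)))"

definition route_cost :: "'n set \<Rightarrow> 'n set \<Rightarrow> ('n \<Rightarrow> 'n \<Rightarrow> real) \<Rightarrow> ('n \<Rightarrow> 'n \<Rightarrow> real)
    \<Rightarrow> ('n \<Rightarrow> 'n \<Rightarrow> bool) \<Rightarrow> ('n \<Rightarrow> 'n \<Rightarrow> bool) \<Rightarrow> real" where
  "route_cost N H tau gamma x y =
     (\<Sum>h\<in>H. \<Sum>l\<in>H. tau h l * of_bool (x h l)) + (\<Sum>i\<in>N. \<Sum>j\<in>N. gamma i j * of_bool (y i j))"

text \<open>g^r(z): optimum cost of trip r under design z (the cost of the lexicographically
  optimal route equals the minimum route cost).\<close>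
definition trip_cost :: "'n set \<Rightarrow> 'n set \<Rightarrow> ('t \<Rightarrow> 'n) \<Rightarrow> ('t \<Rightarrow> 'n)
    \<Rightarrow> ('t \<Rightarrow> 'n \<Rightarrow> 'n \<Rightarrow> real) \<Rightarrow> ('t \<Rightarrow> 'n \<Rightarrow> 'n \<Rightarrow> real) \<Rightarrow> 't
    \<Rightarrow> ('n \<Rightarrow> 'n \<Rightarrow> bool) \<Rightarrow> real" where
  "trip_cost N H orig dest tau gamma r z =
     Min {route_cost N H (tau r) (gamma r) x y | x y. is_route N H z (orig r) (dest r) x y}"

definition dfd_objective :: "'n set \<Rightarrow> 'n set \<Rightarrow> ('n \<Rightarrow> 'n \<Rightarrow> real) \<Rightarrow> ('t \<Rightarrow> real)
    \<Rightarrow> ('t \<Rightarrow> 'n) \<Rightarrow> ('t \<Rightarrow> 'n) \<Rightarrow> ('t \<Rightarrow> 'n \<Rightarrow> 'n \<Rightarrow> real) \<Rightarrow> ('t \<Rightarrow> 'n \<Rightarrow> 'n \<Rightarrow> real)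
    \<Rightarrow> 't set \<Rightarrow> ('n \<Rightarrow> 'n \<Rightarrow> bool) \<Rightarrow> real" where
  "dfd_objective N H beta p orig dest tau gamma T' z =
     (\<Sum>h\<in>H. \<Sum>l\<in>H. beta h l * of_bool (z h l))
     + (\<Sum>r\<in>T'. p r * trip_cost N H orig dest tau gamma r z)"

definition dfd_optimal :: "'n set \<Rightarrow> 'n set \<Rightarrow> ('n \<Rightarrow> 'n \<Rightarrow> real) \<Rightarrow> ('t \<Rightarrow> real)
    \<Rightarrow> ('t \<Rightarrow> 'n) \<Rightarrow> ('t \<Rightarrow> 'n) \<Rightarrow> ('t \<Rightarrow> 'n \<Rightarrow> 'n \<Rightarrow> real) \<Rightarrow> ('t \<Rightarrow> 'n \<Rightarrow> 'n \<Rightarrow> real)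
    \<Rightarrow> 't set \<Rightarrow> ('n \<Rightarrow> 'n \<Rightarrow> bool) \<Rightarrow> bool" where
  "dfd_optimal N H beta p orig dest tau gamma T' z \<longleftrightarrow>
     is_design H z \<and>
     (\<forall>z'. is_design H z' \<longrightarrow>
        dfd_objective N H beta p orig dest tau gamma T' z
          \<le> dfd_objective N H beta p orig dest tau gamma T' z')"

end

theory Submission
  imports Defs
begin

text \<open>The objective over \<open>T2\<close> is the objective over \<open>T1\<close> plus the weighted costs of the
  trips in \<open>T2 - T1\<close>. Adding the optimality of \<open>z1\<close> for \<open>T1\<close> (tested against \<open>z2\<close>) to the
  optimality of \<open>z2\<close> for \<open>T2\<close> (tested against \<open>z1\<close>) cancels everything but those
  added costs.\<close>

lemma minimizer_add_term_le:
  fixes f g :: "'a \<Rightarrow> 'b::ordered_ab_group_add"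
  assumes "z1 \<in> D" and "z2 \<in> D"
    and "\<forall>z\<in>D. f z1 \<le> f z"
    and "\<forall>z\<in>D. f z2 + g z2 \<le> f z + g z"
  shows "g z2 \<le> g z1"
proof -
  have "f z1 + g z2 \<le> f z2 + g z2" using assms(2,3) by (simp add: add_right_mono)
  also have "\<dots> \<le> f z1 + g z1" using assms(1,4) by blast
  finally show ?thesis by simp
qed

lemma dfd_objective_subset_diff:
  assumes "finite T2" and "T1 \<subseteq> T2"
  shows "dfd_objective N H beta p orig dest tau gamma T2 z
       = dfd_objective N H beta p orig dest tau gamma T1 z
         + (\<Sum>r\<in>T2 - T1. p r * trip_cost N H orig dest tau gamma r z)"
  using sum.subset_diff[OF assms(2,1)] by (simp add: dfd_objective_def algebra_simps)

theorem mainTheorem3: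
  fixes N H :: "'n set" and T T1 T2 :: "'t set"
    and beta :: "'n \<Rightarrow> 'n \<Rightarrow> real" and p :: "'t \<Rightarrow> real"
    and orig dest :: "'t \<Rightarrow> 'n" and tau gamma :: "'t \<Rightarrow> 'n \<Rightarrow> 'n \<Rightarrow> real"
    and z1 z2 :: "'n \<Rightarrow> 'n \<Rightarrow> bool"
  assumes "finite N" and "H \<subseteq> N" and "finite T"
    and "\<forall>r\<in>T. orig r \<in> N \<and> dest r \<in> N"
    and "\<forall>r\<in>T. p r \<ge> 0"
    and "T1 \<subseteq> T2" and "T2 \<subseteq> T"
    and "dfd_optimal N H beta p orig dest tau gamma T1 z1"
    and "dfd_optimal N H beta p orig dest tau gamma T2 z2"
  shows "(\<Sum>r\<in>T2 - T1. p r * (trip_cost N H orig dest tau gamma r z2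
                               - trip_cost N H orig dest tau gamma r z1)) \<le> 0"
proof -
  let ?obj = "dfd_objective N H beta p orig dest tau gamma"
  define added where
    "added z = (\<Sum>r\<in>T2 - T1. p r * trip_cost N H orig dest tau gamma r z)" for z
  have "finite T2" using \<open>finite T\<close> \<open>T2 \<subseteq> T\<close> by (rule finite_subset[rotated])
  then have objective_T2: "?obj T2 z = ?obj T1 z + added z" for z
    using \<open>T1 \<subseteq> T2\<close> unfolding added_def by (rule dfd_objective_subset_diff)
  have "added z2 \<le> added z1"
  proof (rule minimizer_add_term_le[where D = "Collect (is_design H)" and f = "?obj T1"])
    show "z1 \<in> Collect (is_design H)" "z2 \<in> Collect (is_design H)"
      using assms(8,9) by (simp_all add: dfd_optimal_def)
    show "\<forall>z\<in>Collect (is_design H). ?obj T1 z1 \<le> ?obj T1 z"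
      using assms(8) by (simp add: dfd_optimal_def)
    show "\<forall>z\<in>Collect (is_design H). ?obj T1 z2 + added z2 \<le> ?obj T1 z + added z"
      using assms(9) by (simp add: dfd_optimal_def flip: objective_T2)
  qed
  then show ?thesis
    by (simp add: added_def right_diff_distrib sum_subtractf)
qed

end
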